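(* Let $K=\mathbb C$, $m=n=2$ (hence $p=2$), let $c\ge1$ and $d\ge 2$ be integers, and let $B=\begin{pmatrix}0&-c\\ d&0\end{pmatrix}$. Then for any pair $\mathbf x=(x_1,x_2)$ of algebraically independent elements of $\mathbb C(X_1,X_2)$, the cluster algebra $\mathcal A(\mathbf x,B)$ is not factorial.
   Context: Let $\mathcal F=\mathbb C(X_1,X_2)$. For $B\in M_{2,2}(\mathbb Z)$ as given and $\mathbf x=(x_1,x_2)$ algebraically independent over $\mathbb C$, $(\mathbf x,B)$ is a seed. For $k\in\{1,2\}$ the mutation $\mu_k(\mathbf x,B)=(\mathbf x',B')$ is given by $b'_{ij}=-b_{ij}$ if $i=k$ or $j=k$, and $b'_{ij}=b_{ij}+\frac{|b_{ik}|b_{kj}+b_{ik}|b_{kj}|}{2}$ otherwise; $x'_s=x_s$ for $s\neq k$ and $x'_k=x_k^{-1}\big(\prod_{b_{ik}>0}x_i^{b_{ik}}+\prod_{b_{ik}<0}x_i^{-b_{ik}}\big)$. The cluster algebra $\mathcal A(\mathbf x,B)$ is the $\mathbb C$-subalgebra of $\mathcal F$ generated by all entries $y_1,y_2$ of all seeds $(\mathbf y,C)$ obtained from $(\mathbf x,B)$ by finite sequences of mutations. *)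

theory Defs
  imports "HOL-Computational_Algebra.Polynomial" "HOL-Computational_Algebra.Fraction_Field"
          "HOL-Algebra.Ring_Divisibility"
begin

text \<open>The field C(X1,X2), realised as the fraction field of C[X1][X2].
  A bivariate polynomial P :: complex poly poly is read as
  P = sum_i (sum_j coeff (Polynomial.coeff P i) j * X1^j) * X2^i.\<close>
type_synonym ratfun2 = "complex poly poly fract"

definition cst :: "complex \<Rightarrow> ratfun2" where
  "cst a = Fract [:[:a:]:] 1"

definition eval2 :: "complex poly poly \<Rightarrow> ratfun2 \<Rightarrow> ratfun2 \<Rightarrow> ratfun2" where
  "eval2 P a b = (\<Sum>i\<le>degree P. (\<Sum>j\<le>degree (Polynomial.coeff P i). cst (Polynomial.coeff (Polynomial.coeff P i) j) * a ^ j) * b ^ i)"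

definition alg_indep2 :: "ratfun2 \<Rightarrow> ratfun2 \<Rightarrow> bool" where
  "alg_indep2 a b \<longleftrightarrow> (\<forall>P. eval2 P a b = 0 \<longrightarrow> P = 0)"

text \<open>Seeds of rank 2: a cluster (indexed by 1,2) and an exchange matrix (indexed by 1,2).\<close>
type_synonym seed = "(nat \<Rightarrow> ratfun2) \<times> (nat \<Rightarrow> nat \<Rightarrow> int)"

definition mut_matrix :: "nat \<Rightarrow> (nat \<Rightarrow> nat \<Rightarrow> int) \<Rightarrow> (nat \<Rightarrow> nat \<Rightarrow> int)" where
  "mut_matrix k B = (\<lambda>i j. if i = k \<or> j = k then - B i j
      else B i j + (\<bar>B i k\<bar> * B k j + B i k * \<bar>B k j\<bar>) div 2)"

definition mut_cluster :: "nat \<Rightarrow> (nat \<Rightarrow> ratfun2) \<Rightarrow> (nat \<Rightarrow> nat \<Rightarrow> int) \<Rightarrow> (nat \<Rightarrow> ratfun2)" where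
  "mut_cluster k x B = x(k := inverse (x k) *
      ((\<Prod>i\<in>{i\<in>{1,2}. B i k > 0}. x i ^ nat (B i k)) +
       (\<Prod>i\<in>{i\<in>{1,2}. B i k < 0}. x i ^ nat (- B i k))))"

definition mutate :: "nat \<Rightarrow> seed \<Rightarrow> seed" where
  "mutate k s = (mut_cluster k (fst s) (snd s), mut_matrix k (snd s))"

inductive_set reachable_seeds :: "seed \<Rightarrow> seed set" for s0 where
  base: "s0 \<in> reachable_seeds s0"
| step: "s \<in> reachable_seeds s0 \<Longrightarrow> k \<in> {1,2} \<Longrightarrow> mutate k s \<in> reachable_seeds s0"

inductive_set cluster_algebra :: "seed \<Rightarrow> ratfun2 set" for s0 where
  const: "cst a \<in> cluster_algebra s0"
| var: "s \<in> reachable_seeds s0 \<Longrightarrow> k \<in> {1,2} \<Longrightarrow> fst s k \<in> cluster_algebra s0"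
| add: "u \<in> cluster_algebra s0 \<Longrightarrow> v \<in> cluster_algebra s0 \<Longrightarrow> u + v \<in> cluster_algebra s0"
| mult: "u \<in> cluster_algebra s0 \<Longrightarrow> v \<in> cluster_algebra s0 \<Longrightarrow> u * v \<in> cluster_algebra s0"

definition subring_struct :: "ratfun2 set \<Rightarrow> ratfun2 ring" where
  "subring_struct A = \<lparr>carrier = A, monoid.mult = (*), one = 1, zero = 0, add = (+)\<rparr>"

end

theory Submission
  imports Defs
begin

text \<open>Let z n be the cluster variables, z (n - 1) z (n + 1) = z n ^ e n + 1 with e n alternating
  between c and d and z 1 = x1, z 2 = x2. By the Laurent phenomenon the cluster algebra A lies in
  the Laurent rings of the clusters (x1, x2), (z 3, x2) and (z 0, x1). The first forces the factors
  of x1 in A to be Laurent monomials, and the other two forbid negative exponents in elements of A,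
  so x1 is irreducible. On the other hand x1 z 3 = x2 ^ d + 1 is a product of d \<ge> 2 linear
  factors x2 - \<zeta>, and x1 divides no proper subproduct h(x2): the quotient would be
  h(x2) z 3 / (x2 ^ d + 1), which is not a Laurent polynomial in z 3, x2. Hence x1 is not prime
  and A is not factorial.\<close>

(* Defs imports HOL-Algebra, whose polynomials and modules reuse these names. *)
hide_const (open) up_ring.coeff up_ring.monom module.smult

section \<open>Bivariate polynomials and algebraic independence\<close>

lemma cst_add: "cst (a + b) = cst a + cst b"
  by (simp add: cst_def)

lemma cst_mult: "cst (a * b) = cst a * cst b"
  by (simp add: cst_def)

lemma cst_0 [simp]: "cst 0 = 0"
  by (simp add: cst_def Zero_fract_def)

lemma cst_1 [simp]: "cst 1 = 1"
  by (simp add: cst_def One_fract_def pCons_one)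

lemma cst_eq_0_iff [simp]: "cst a = 0 \<longleftrightarrow> a = 0"
  by (simp add: cst_def Zero_fract_def eq_fract)

lemma map_poly_add_hom:
  assumes "f 0 = 0" and "\<And>x y. f (x + y) = f x + f y"
  shows "map_poly f (p + q) = map_poly f p + map_poly f q"
  by (simp add: poly_eq_iff coeff_map_poly assms)

lemma map_poly_mult_hom:
  fixes f :: "'a::comm_ring_1 \<Rightarrow> 'b::comm_ring_1"
  assumes f0: "f 0 = 0" and f_add: "\<And>x y. f (x + y) = f x + f y"
    and f_mult: "\<And>x y. f (x * y) = f x * f y"
  shows "map_poly f (p * q) = map_poly f p * map_poly f q"
  by (simp add: poly_eq_iff coeff_map_poly f0 coeff_mult f_mult
      flip: sum_comp_morphism[of f, OF f0 f_add, unfolded o_def])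

lemma poly_altdef_bound:
  fixes p :: "'a::comm_semiring_1 poly"
  assumes "degree p \<le> n"
  shows "poly p x = (\<Sum>i\<le>n. coeff p i * x ^ i)"
proof -
  have "poly p x = poly (\<Sum>i\<le>n. monom (coeff p i) i) x"
    using poly_as_sum_of_monoms'[OF assms] by simp
  then show ?thesis
    by (simp add: poly_sum poly_monom)
qed

definition peval :: "ratfun2 \<Rightarrow> complex poly \<Rightarrow> ratfun2" where
  "peval a p = poly (map_poly cst p) a"

lemma peval_0 [simp]: "peval a 0 = 0"
  by (simp add: peval_def)

lemma peval_1 [simp]: "peval a 1 = 1"
  by (simp add: peval_def)

lemma peval_add: "peval a (p + q) = peval a p + peval a q"
  by (simp add: peval_def map_poly_add_hom cst_add)

lemma peval_mult: "peval a (p * q) = peval a p * peval a q"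
  by (simp add: peval_def map_poly_mult_hom cst_add cst_mult)

lemma peval_power: "peval a (p ^ n) = peval a p ^ n"
  by (induction n) (simp_all add: peval_mult)

lemma peval_const [simp]: "peval a [:c:] = cst c"
  by (simp add: peval_def map_poly_pCons)

lemma peval_X [simp]: "peval a [:0, 1:] = a"
  by (simp add: peval_def map_poly_pCons)

lemma peval_monom [simp]: "peval a (monom c n) = cst c * a ^ n"
  by (simp add: peval_def map_poly_monom poly_monom)

lemma eval2_altdef: "eval2 P a b = poly (map_poly (peval a) P) b"
proof -
  have "peval a p = (\<Sum>j\<le>degree p. cst (coeff p j) * a ^ j)" for p
    unfolding peval_def by (subst poly_altdef_bound[OF map_poly_degree_leq]) (simp add: coeff_map_poly)
  then show ?thesis
    unfolding eval2_def by (subst poly_altdef_bound[OF map_poly_degree_leq]) (simp add: coeff_map_poly)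
qed

lemma eval2_0 [simp]: "eval2 0 a b = 0"
  by (simp add: eval2_altdef)

lemma eval2_1 [simp]: "eval2 1 a b = 1"
  by (simp add: eval2_altdef)

lemma eval2_add: "eval2 (P + Q) a b = eval2 P a b + eval2 Q a b"
  by (simp add: eval2_altdef map_poly_add_hom peval_add)

lemma eval2_mult: "eval2 (P * Q) a b = eval2 P a b * eval2 Q a b"
  by (simp add: eval2_altdef map_poly_mult_hom peval_add peval_mult)

lemma eval2_power: "eval2 (P ^ n) a b = eval2 P a b ^ n"
  by (induction n) (simp_all add: eval2_mult)

lemma eval2_diff: "eval2 (P - Q) a b = eval2 P a b - eval2 Q a b"
  using eval2_add[of "P - Q" Q a b] by simp

lemma eval2_sum: "eval2 (sum f A) a b = (\<Sum>x\<in>A. eval2 (f x) a b)"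
  using sum_comp_morphism[of "\<lambda>P. eval2 P a b" f A] by (simp add: eval2_add o_def)

lemma eval2_const [simp]: "eval2 [:p:] a b = peval a p"
  by (simp add: eval2_altdef map_poly_pCons)

lemma eval2_monom [simp]: "eval2 (monom p n) a b = peval a p * b ^ n"
  by (simp add: eval2_altdef map_poly_monom poly_monom)

lemma eval2_X [simp]: "eval2 [:[:0, 1:]:] a b = a"
  by simp

lemma eval2_Y [simp]: "eval2 [:0, 1:] a b = b"
  by (simp add: eval2_altdef map_poly_pCons)

definition swap_vars :: "complex poly poly \<Rightarrow> complex poly poly" where
  "swap_vars P = (\<Sum>i\<le>degree P. \<Sum>j\<le>degree (coeff P i). monom (monom (coeff (coeff P i) j) i) j)"

lemma eval2_swap_vars: "eval2 (swap_vars P) a b = eval2 P b a"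
  unfolding swap_vars_def eval2_def[of P b a]
  by (simp add: eval2_sum sum_distrib_right sum_distrib_left mult.commute mult.left_commute)

lemma coeff_swap_vars: "coeff (coeff (swap_vars P) j) i = coeff (coeff P i) j"
proof -
  have "coeff (coeff (swap_vars P) j) i =
     (\<Sum>i'\<le>degree P. \<Sum>j'\<le>degree (coeff P i').
        if j' = j then (if i' = i then coeff (coeff P i') j' else 0) else 0)"
    unfolding swap_vars_def by (simp add: coeff_sum coeff_monom if_distrib[of "\<lambda>p. coeff p i"] cong: if_cong)
  also have "\<dots> = (\<Sum>i'\<le>degree P. if i' = i then
      (if j \<le> degree (coeff P i') then coeff (coeff P i') j else 0) else 0)"
    by (rule sum.cong[OF refl]) auto
  also have "\<dots> = coeff (coeff P i) j"
    by (simp add: coeff_eq_0 not_le)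
  finally show ?thesis .
qed

lemma swap_vars_eq_0_iff [simp]: "swap_vars P = 0 \<longleftrightarrow> P = 0"
  by (metis coeff_swap_vars coeff_0 poly_eqI)

definition exch_poly :: "nat \<Rightarrow> 'a::comm_ring_1 poly" where
  "exch_poly q = monom 1 q + 1"

lemma exch_poly_nonzero [simp]: "(exch_poly q :: 'a::{comm_ring_1,ring_char_0} poly) \<noteq> 0"
proof -
  have "poly (exch_poly q :: 'a poly) 0 \<noteq> 0"
    by (cases q) (simp_all add: exch_poly_def poly_monom)
  then show ?thesis
    by auto
qed

lemma peval_exch_poly [simp]: "peval a (exch_poly q) = a ^ q + 1"
  by (simp add: exch_poly_def peval_add)

lemma eval2_exch_poly [simp]: "eval2 (exch_poly q) a b = b ^ q + 1"
  by (simp add: exch_poly_def eval2_add)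

lemma alg_indep2_eval2_inj: "alg_indep2 u v \<Longrightarrow> eval2 P u v = eval2 Q u v \<Longrightarrow> P = Q"
  unfolding alg_indep2_def using eval2_diff[of P Q u v] by force

lemma alg_indep2_nonzero:
  assumes "alg_indep2 u v"
  shows "u \<noteq> 0" and "v \<noteq> 0"
  using assms unfolding alg_indep2_def by (metis eval2_X eval2_Y pCons_eq_0_iff one_neq_zero)+

lemma alg_indep2_commute: "alg_indep2 u v \<Longrightarrow> alg_indep2 v u"
  unfolding alg_indep2_def by (metis eval2_swap_vars swap_vars_eq_0_iff)

definition homogenize :: "complex poly \<Rightarrow> complex poly poly \<Rightarrow> complex poly poly" where
  "homogenize B P = (\<Sum>i\<le>degree P. monom (coeff P i * B ^ i) (degree P - i))"

lemma coeff_homogenize: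
  assumes "i \<le> degree P"
  shows "coeff (homogenize B P) (degree P - i) = coeff P i * B ^ i"
proof -
  have "coeff (homogenize B P) (degree P - i) =
      (\<Sum>i'\<le>degree P. if i' = i then coeff P i' * B ^ i' else 0)"
    unfolding homogenize_def coeff_sum coeff_monom
    by (rule sum.cong[OF refl]) (use assms in auto)
  then show ?thesis
    using assms by simp
qed

lemma eval2_homogenize:
  assumes "u \<noteq> 0"
  shows "eval2 (homogenize B P) v u = eval2 P v (peval v B / u) * u ^ degree P"
proof -
  let ?w = "peval v B / u" and ?M = "degree P"
  have "eval2 (homogenize B P) v u = (\<Sum>i\<le>?M. peval v (coeff P i) * (?w * u) ^ i * u ^ (?M - i))"
    using assms by (simp add: homogenize_def eval2_sum peval_mult peval_power)
  also have "\<dots> = (\<Sum>i\<le>?M. peval v (coeff P i) * ?w ^ i * u ^ ?M)"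
  proof (rule sum.cong[OF refl])
    fix i assume "i \<in> {..?M}"
    then have "u ^ ?M = u ^ i * u ^ (?M - i)"
      by (simp flip: power_add)
    then show "peval v (coeff P i) * (?w * u) ^ i * u ^ (?M - i) = peval v (coeff P i) * ?w ^ i * u ^ ?M"
      using assms by (simp add: power_mult_distrib power_divide)
  qed
  also have "\<dots> = eval2 P v ?w * u ^ ?M"
    unfolding eval2_altdef
    by (subst poly_altdef_bound[OF map_poly_degree_leq]) (simp add: coeff_map_poly sum_distrib_right)
  finally show ?thesis .
qed

text \<open>Clearing denominators turns a relation P(v, (v ^ q + 1) / u) = 0 into the relation
  \<open>homogenize (exch_poly q) P\<close> between v and u.\<close>

lemma alg_indep2_exchange:
  assumes "alg_indep2 u v"
  shows "alg_indep2 v ((v ^ q + 1) / u)"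
  unfolding alg_indep2_def
proof (intro allI impI)
  fix P assume P: "eval2 P v ((v ^ q + 1) / u) = 0"
  have indep: "alg_indep2 v u" and "u \<noteq> 0"
    using assms alg_indep2_commute alg_indep2_nonzero by blast+
  then have "eval2 (homogenize (exch_poly q) P) v u = 0"
    using P by (simp add: eval2_homogenize)
  then have "homogenize (exch_poly q) P = 0"
    using indep alg_indep2_def by blast
  then have "coeff P i = 0" for i
    using coeff_homogenize[of i P "exch_poly q"] by (cases "i \<le> degree P") (auto simp: coeff_eq_0)
  then show "P = 0"
    by (simp add: poly_eqI)
qed

section \<open>Subalgebras and Laurent rings\<close>

definition is_subalgebra :: "ratfun2 set \<Rightarrow> bool" where
  "is_subalgebra S \<longleftrightarrow> (\<forall>a. cst a \<in> S) \<and> (\<forall>x\<in>S. \<forall>y\<in>S. x + y \<in> S) \<and> (\<forall>x\<in>S. \<forall>y\<in>S. x * y \<in> S)"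

context
  fixes S assumes S: "is_subalgebra S"
begin

lemma subalgebra_cst: "cst a \<in> S"
  using S by (simp add: is_subalgebra_def)

lemma subalgebra_add: "x \<in> S \<Longrightarrow> y \<in> S \<Longrightarrow> x + y \<in> S"
  using S by (simp add: is_subalgebra_def)

lemma subalgebra_mult: "x \<in> S \<Longrightarrow> y \<in> S \<Longrightarrow> x * y \<in> S"
  using S by (simp add: is_subalgebra_def)

lemma subalgebra_power: "x \<in> S \<Longrightarrow> x ^ n \<in> S"
  using subalgebra_cst[of 1] by (induction n) (simp_all add: subalgebra_mult)

lemma subalgebra_sum: "(\<And>x. x \<in> A \<Longrightarrow> f x \<in> S) \<Longrightarrow> sum f A \<in> S"
  using subalgebra_cst[of 0] by (induction A rule: infinite_finite_induct) (simp_all add: subalgebra_add)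

lemma subalgebra_eval2: "u \<in> S \<Longrightarrow> v \<in> S \<Longrightarrow> eval2 P u v \<in> S"
  unfolding eval2_def by (intro subalgebra_sum subalgebra_mult subalgebra_power subalgebra_cst)

end

text \<open>\<open>Laurent_loc u v D\<close> is the localisation of C[u,v] at u, v and D(u,v);
  \<open>Laurent u v\<close> is the Laurent polynomial ring in u and v.\<close>

definition Laurent_loc :: "ratfun2 \<Rightarrow> ratfun2 \<Rightarrow> complex poly poly \<Rightarrow> ratfun2 set" where
  "Laurent_loc u v D = {f. \<exists>P i j k. f * u ^ i * v ^ j * eval2 D u v ^ k = eval2 P u v}"

definition Laurent :: "ratfun2 \<Rightarrow> ratfun2 \<Rightarrow> ratfun2 set" where
  "Laurent u v = {f. \<exists>P i j. f * u ^ i * v ^ j = eval2 P u v}"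

lemma Laurent_locI: "f * u ^ i * v ^ j * eval2 D u v ^ k = eval2 P u v \<Longrightarrow> f \<in> Laurent_loc u v D"
  unfolding Laurent_loc_def by blast

lemma LaurentI: "f * u ^ i * v ^ j = eval2 P u v \<Longrightarrow> f \<in> Laurent u v"
  unfolding Laurent_def by blast

lemma Laurent_eq_Laurent_loc_1: "Laurent u v = Laurent_loc u v 1"
  unfolding Laurent_def Laurent_loc_def by auto

lemma eval2_in_Laurent_loc: "eval2 P u v \<in> Laurent_loc u v D"
  by (rule Laurent_locI[of _ _ 0 _ 0 _ 0]) simp

lemma Laurent_loc_add:
  assumes "f \<in> Laurent_loc u v D" and "g \<in> Laurent_loc u v D"
  shows "f + g \<in> Laurent_loc u v D"
proof -
  let ?e = "eval2 D u v" and ?X = "[:[:0, 1:]:]" and ?Y = "[:0, 1:]"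
  obtain P i j k where f: "f * u ^ i * v ^ j * ?e ^ k = eval2 P u v"
    using assms(1) Laurent_loc_def by blast
  obtain Q i' j' k' where g: "g * u ^ i' * v ^ j' * ?e ^ k' = eval2 Q u v"
    using assms(2) Laurent_loc_def by blast
  have "(f + g) * u ^ (i + i') * v ^ (j + j') * ?e ^ (k + k') =
      (f * u ^ i * v ^ j * ?e ^ k) * u ^ i' * v ^ j' * ?e ^ k'
      + (g * u ^ i' * v ^ j' * ?e ^ k') * u ^ i * v ^ j * ?e ^ k"
    by (simp add: power_add algebra_simps)
  also have "\<dots> = eval2 (P * ?X ^ i' * ?Y ^ j' * D ^ k' + Q * ?X ^ i * ?Y ^ j * D ^ k) u v"
    unfolding f g by (simp add: eval2_add eval2_mult eval2_power)
  finally show ?thesis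
    by (rule Laurent_locI)
qed

lemma Laurent_loc_mult:
  assumes "f \<in> Laurent_loc u v D" and "g \<in> Laurent_loc u v D"
  shows "f * g \<in> Laurent_loc u v D"
proof -
  let ?e = "eval2 D u v"
  obtain P i j k where f: "f * u ^ i * v ^ j * ?e ^ k = eval2 P u v"
    using assms(1) Laurent_loc_def by blast
  obtain Q i' j' k' where g: "g * u ^ i' * v ^ j' * ?e ^ k' = eval2 Q u v"
    using assms(2) Laurent_loc_def by blast
  have "(f * g) * u ^ (i + i') * v ^ (j + j') * ?e ^ (k + k') =
      (f * u ^ i * v ^ j * ?e ^ k) * (g * u ^ i' * v ^ j' * ?e ^ k')"
    by (simp add: power_add algebra_simps)
  also have "\<dots> = eval2 (P * Q) u v"
    unfolding f g by (simp add: eval2_mult)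
  finally show ?thesis
    by (rule Laurent_locI)
qed

lemma subalgebra_Laurent_loc: "is_subalgebra (Laurent_loc u v D)"
  unfolding is_subalgebra_def
  using eval2_in_Laurent_loc[of "[:[:_:]:]" u v D] Laurent_loc_add Laurent_loc_mult by auto

lemma subalgebra_Laurent: "is_subalgebra (Laurent u v)"
  by (simp add: Laurent_eq_Laurent_loc_1 subalgebra_Laurent_loc)

lemma Laurent_subset:
  assumes S: "is_subalgebra S" and "u \<noteq> 0" "v \<noteq> 0"
    and "u \<in> S" "v \<in> S" "inverse u \<in> S" "inverse v \<in> S"
  shows "Laurent u v \<subseteq> S"
proof
  fix f assume "f \<in> Laurent u v"
  then obtain P i j where "f * u ^ i * v ^ j = eval2 P u v"
    unfolding Laurent_def by blast
  then have "f = eval2 P u v * inverse u ^ i * inverse v ^ j"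
    using assms(2,3) by (simp add: field_simps power_inverse)
  also have "\<dots> \<in> S"
    using assms by (intro subalgebra_mult subalgebra_power subalgebra_eval2) auto
  finally show "f \<in> S" .
qed

lemma Laurent_commute: "Laurent u v = Laurent v u"
proof -
  have "Laurent u v \<subseteq> Laurent v u" for u v
  proof
    fix f assume "f \<in> Laurent u v"
    then obtain P i j where "f * u ^ i * v ^ j = eval2 P u v"
      unfolding Laurent_def by blast
    then have "f * v ^ j * u ^ i = eval2 (swap_vars P) v u"
      by (simp add: eval2_swap_vars mult_ac)
    then show "f \<in> Laurent v u"
      by (rule LaurentI)
  qed
  then show ?thesis
    by blast
qed

lemma Laurent_gen1: "u \<in> Laurent u v"
  by (rule LaurentI[of _ _ 0 _ 0 "[:[:0, 1:]:]"]) simp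

lemma Laurent_gen2: "v \<in> Laurent u v"
  by (rule LaurentI[of _ _ 0 _ 0 "[:0, 1:]"]) simp

section \<open>Divisibility by Y ^ q + 1\<close>

text \<open>\<open>specialize w P\<close> is P(1, w), the outer variable of P being Y.\<close>

definition specialize :: "complex \<Rightarrow> complex poly poly \<Rightarrow> complex" where
  "specialize w P = poly (poly P [:w:]) 1"

lemma specialize_add: "specialize w (P + Q) = specialize w P + specialize w Q"
  by (simp add: specialize_def)

lemma specialize_mult: "specialize w (P * Q) = specialize w P * specialize w Q"
  by (simp add: specialize_def)

lemma specialize_power: "specialize w (P ^ n) = specialize w P ^ n"
  by (simp add: specialize_def poly_power)

lemma specialize_sum: "specialize w (sum f A) = (\<Sum>x\<in>A. specialize w (f x))"
  using sum_comp_morphism[of "specialize w" f A] by (simp add: specialize_add specialize_def o_def)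

lemma specialize_1 [simp]: "specialize w 1 = 1"
  by (simp add: specialize_def)

lemma specialize_X [simp]: "specialize w [:[:0, 1:]:] = 1"
  by (simp add: specialize_def)

lemma specialize_Y [simp]: "specialize w [:0, 1:] = w"
  by (simp add: specialize_def)

lemma specialize_exch_poly [simp]: "specialize w (exch_poly q) = w ^ q + 1"
  by (simp add: specialize_def exch_poly_def poly_monom poly_const_pow)

lemma poly_exch_poly_root: "w ^ q = -1 \<Longrightarrow> poly (exch_poly q) [:w:] = 0"
  by (simp add: exch_poly_def poly_monom poly_const_pow flip: pCons_one)

lemma degree_exch_poly: "q \<ge> 1 \<Longrightarrow> degree (exch_poly q :: 'a::{comm_ring_1,ring_char_0} poly) = q"
  by (simp add: exch_poly_def degree_add_eq_left degree_monom_eq)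

lemma exch_poly_dvd_if_roots:
  fixes P :: "complex poly poly"
  assumes q: "q \<ge> 1" and roots: "\<And>w. w ^ q = -1 \<Longrightarrow> poly P [:w:] = 0"
  shows "exch_poly q dvd P"
proof -
  let ?B = "exch_poly q :: complex poly poly"
  have deg: "degree ?B = q"
    by (rule degree_exch_poly[OF q])
  obtain Q R where pd: "pseudo_divmod P ?B = (Q, R)"
    by (cases "pseudo_divmod P ?B") auto
  have "lead_coeff ?B = 1"
    using q by (simp add: deg) (simp add: exch_poly_def)
  then have P: "P = ?B * Q + R"
    using pseudo_divmod(1)[OF _ pd] by simp
  have R: "R = 0 \<or> degree R < q"
    using pseudo_divmod(2)[OF _ pd] deg by simp
  have "R = 0"
  proof (rule ccontr)
    assume "R \<noteq> 0"
    have "(\<lambda>w. [:w:]) ` {w::complex. w ^ q = -1} \<subseteq> {x. poly R x = 0}"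
    proof
      fix x assume "x \<in> (\<lambda>w. [:w:]) ` {w::complex. w ^ q = -1}"
      then obtain w where w: "w ^ q = -1" "x = [:w:]"
        by auto
      have "poly R [:w:] = poly P [:w:]"
        using P poly_exch_poly_root[OF w(1)] by simp
      then show "x \<in> {x. poly R x = 0}"
        using roots w by simp
    qed
    moreover have "card ((\<lambda>w. [:w:]) ` {w::complex. w ^ q = -1}) = q"
      using card_nth_roots[of "-1" q] q by (simp add: card_image inj_on_def)
    ultimately have "q \<le> card {x. poly R x = 0}"
      using card_mono[OF poly_roots_finite[OF \<open>R \<noteq> 0\<close>]] by metis
    also have "\<dots> \<le> degree R"
      by (rule card_poly_roots_bound[OF \<open>R \<noteq> 0\<close>])
    finally show False
      using R \<open>R \<noteq> 0\<close> by simp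
  qed
  then show ?thesis
    using P by simp
qed

lemma exch_poly_power_dvd_cancel:
  fixes P M :: "complex poly poly"
  assumes q: "q \<ge> 1" and M: "\<And>w. w ^ q = -1 \<Longrightarrow> poly M [:w:] \<noteq> 0"
  shows "exch_poly q ^ k dvd P * M \<Longrightarrow> exch_poly q ^ k dvd P"
proof (induction k arbitrary: P)
  case 0
  then show ?case
    by simp
next
  case (Suc k)
  let ?B = "exch_poly q :: complex poly poly"
  have "?B dvd P * M"
    using Suc.prems by (metis dvd_mult_left power_Suc)
  then obtain T where T: "P * M = ?B * T"
    by (auto elim: dvdE)
  have "poly P [:w:] = 0" if w: "w ^ q = -1" for w
  proof -
    have "poly P [:w:] * poly M [:w:] = 0"
      using T poly_exch_poly_root[OF w] by (metis poly_mult mult_zero_left)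
    then show ?thesis
      using M[OF w] by simp
  qed
  then have "?B dvd P"
    by (rule exch_poly_dvd_if_roots[OF q])
  then obtain P' where P': "P = ?B * P'"
    by (auto elim: dvdE)
  have "?B * ?B ^ k dvd ?B * (P' * M)"
    using Suc.prems P' by (simp add: mult.assoc)
  then have "?B ^ k dvd P' * M"
    by simp
  then have "?B ^ k dvd P'"
    by (rule Suc.IH)
  then show ?case
    using P' by simp
qed

definition lift_Y :: "complex poly \<Rightarrow> complex poly poly" where
  "lift_Y h = map_poly (\<lambda>c. [:c:]) h"

lemma eval2_lift_Y [simp]: "eval2 (lift_Y h) u v = peval v h"
proof -
  have "map_poly (peval u) (map_poly (\<lambda>c. [:c:]) h) = map_poly cst h"
    by (subst map_poly_map_poly) (simp_all add: o_def)
  then show ?thesis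
    by (simp add: eval2_altdef lift_Y_def peval_def)
qed

lemma specialize_lift_Y [simp]: "specialize w (lift_Y h) = poly h w"
proof -
  have "poly (lift_Y h) [:w:] = [:poly h w:]"
    unfolding lift_Y_def
    by (induction h) (simp_all add: map_poly_pCons algebra_simps flip: pCons_one)
  then show ?thesis
    by (simp add: specialize_def)
qed

text \<open>Otherwise P (Y ^ q + 1) = h(Y) X^a' Y^b' for some polynomial P, and specialising
  X := 1, Y := w gives 0 = h(w) w^b'.\<close>

lemma not_in_Laurent_if_exch_denominator:
  assumes indep: "alg_indep2 u v" and w: "w ^ q = -1" and hw: "poly h w \<noteq> 0"
    and g: "g * (v ^ q + 1) = peval v h * u ^ a * v ^ b"
  shows "g \<notin> Laurent u v"
proof
  let ?X = "[:[:0, 1:]:]" and ?Y = "[:0, 1:]"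
  assume "g \<in> Laurent u v"
  then obtain P i j where P: "g * u ^ i * v ^ j = eval2 P u v"
    unfolding Laurent_def by blast
  have "eval2 (P * exch_poly q) u v = (g * u ^ i * v ^ j) * (v ^ q + 1)"
    by (simp add: eval2_mult P)
  also have "\<dots> = (g * (v ^ q + 1)) * u ^ i * v ^ j"
    by (simp add: mult_ac)
  also have "\<dots> = eval2 (lift_Y h * ?X ^ (a + i) * ?Y ^ (b + j)) u v"
    unfolding g by (simp add: eval2_mult eval2_power power_add mult_ac)
  finally have "P * exch_poly q = lift_Y h * ?X ^ (a + i) * ?Y ^ (b + j)"
    by (rule alg_indep2_eval2_inj[OF indep])
  then have "specialize w (P * exch_poly q) = specialize w (lift_Y h * ?X ^ (a + i) * ?Y ^ (b + j))"
    by simp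
  moreover have "specialize w (exch_poly q) = 0"
    using w by simp
  moreover have "w \<noteq> 0"
    using w by (cases q) auto
  ultimately show False
    using hw by (simp add: specialize_mult specialize_power)
qed

lemma exists_root_neg1_nonroot:
  assumes q: "q \<ge> 1" and h: "h \<noteq> 0" "degree h < q"
  shows "\<exists>w::complex. w ^ q = -1 \<and> poly h w \<noteq> 0"
proof (rule ccontr)
  assume "\<not> ?thesis"
  then have "card {w::complex. w ^ q = -1} \<le> card {x. poly h x = 0}"
    by (intro card_mono[OF poly_roots_finite[OF h(1)]]) auto
  also have "\<dots> \<le> degree h"
    by (rule card_poly_roots_bound[OF h(1)])
  finally show False
    using card_nth_roots[of "-1" q] q h(2) by simp
qed

section \<open>Exchange sequences and the Laurent phenomenon\<close>

declare mult_pCons_left [simp del] mult_pCons_right [simp del]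

text \<open>The cluster variables of a rank 2 cluster algebra, indexed by the integers.\<close>

definition exchange_seq :: "(int \<Rightarrow> nat) \<Rightarrow> (int \<Rightarrow> ratfun2) \<Rightarrow> bool" where
  "exchange_seq e s \<longleftrightarrow> (\<forall>n. e n \<ge> 1) \<and> (\<forall>n. e (n + 2) = e n) \<and>
     (\<forall>n. alg_indep2 (s n) (s (n + 1))) \<and> (\<forall>n. s (n - 1) * s (n + 1) = s n ^ e n + 1)"

lemma exchange_seq_shift:
  assumes "exchange_seq e s"
  shows "exchange_seq (\<lambda>n. e (n + k)) (\<lambda>n. s (n + k))"
  unfolding exchange_seq_def
proof (intro conjI allI)
  fix n
  show "e (n + k) \<ge> 1"
    using assms exchange_seq_def by blast
  show "e (n + 2 + k) = e (n + k)"
    using assms unfolding exchange_seq_def by (metis add.commute add.left_commute)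
  show "alg_indep2 (s (n + k)) (s (n + 1 + k))"
    using assms unfolding exchange_seq_def by (metis add.commute add.left_commute)
  have "s (n + k - 1) * s (n + k + 1) = s (n + k) ^ e (n + k) + 1"
    using assms unfolding exchange_seq_def by blast
  then show "s (n - 1 + k) * s (n + 1 + k) = s (n + k) ^ e (n + k) + 1"
    by (simp add: algebra_simps)
qed

lemma exchange_seq_reflect:
  assumes "exchange_seq e s"
  shows "exchange_seq (\<lambda>n. e (k - n)) (\<lambda>n. s (k - n))"
  unfolding exchange_seq_def
proof (intro conjI allI)
  fix n
  show "e (k - n) \<ge> 1"
    using assms exchange_seq_def by blast
  have "e (k - n - 2 + 2) = e (k - n - 2)"
    using assms exchange_seq_def by blast
  then show "e (k - (n + 2)) = e (k - n)"
    by (simp add: algebra_simps)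
  have "alg_indep2 (s (k - n - 1)) (s (k - n - 1 + 1))"
    using assms exchange_seq_def by blast
  then show "alg_indep2 (s (k - n)) (s (k - (n + 1)))"
    by (simp add: alg_indep2_commute algebra_simps)
  have "s (k - n - 1) * s (k - n + 1) = s (k - n) ^ e (k - n) + 1"
    using assms unfolding exchange_seq_def by blast
  then show "s (k - (n - 1)) * s (k - (n + 1)) = s (k - n) ^ e (k - n) + 1"
    by (simp add: algebra_simps)
qed

lemma exchange_seq_nonzero: "exchange_seq e s \<Longrightarrow> s n \<noteq> 0"
  unfolding exchange_seq_def using alg_indep2_nonzero by blast

lemma exchange_seq_rel: "exchange_seq e s \<Longrightarrow> s (n - 1) * s (n + 1) = s n ^ e n + 1"
  unfolding exchange_seq_def by blast

text \<open>With X = s 1, Y = s 2, p = e 1, q = e 2 the next terms are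
  s 3 = B/X, s 4 = N/(X^p Y) and s 5 = Q/(X^(pq-1) Y^q), where B = Y^q + 1, N = B^p + X^p
  and Q is the polynomial \<open>num5\<close> below.\<close>

definition num4 :: "nat \<Rightarrow> nat \<Rightarrow> complex poly poly" where
  "num4 p q = exch_poly q ^ p + [:[:0, 1:]:] ^ p"

definition num5 :: "nat \<Rightarrow> nat \<Rightarrow> complex poly poly" where
  "num5 p q = ([:[:0, 1:]:] ^ p) ^ q +
     exch_poly q ^ (p - 1) * (\<Sum>i<q. ([:[:0, 1:]:] ^ p) ^ (q - Suc i) * num4 p q ^ i)"

lemma num5_identity:
  assumes "p \<ge> 1"
  shows "num4 p q ^ q + ([:[:0, 1:]:] ^ p) ^ q * monom 1 q = exch_poly q * num5 p q"
proof -
  let ?X = "[:[:0, 1:]:] :: complex poly poly" and ?B = "exch_poly q :: complex poly poly"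
  let ?S = "\<Sum>i<q. (?X ^ p) ^ (q - Suc i) * num4 p q ^ i"
  have diff: "num4 p q ^ q - (?X ^ p) ^ q = ?B ^ p * ?S"
    unfolding power_diff_sumr2 by (simp add: num4_def)
  have "?B * ?B ^ (p - 1) = ?B ^ p"
    using assms by (metis Suc_diff_1 less_le_trans power_Suc zero_less_one)
  then have "?B * num5 p q = ?B * (?X ^ p) ^ q + ?B ^ p * ?S"
    unfolding num5_def by (simp add: algebra_simps)
  then show ?thesis
    using diff by (simp add: algebra_simps exch_poly_def)
qed

lemma specialize_num4_num5:
  assumes p: "p \<ge> 1" and w: "w ^ q = -1"
  shows "specialize w (num4 p q) = 1" and "specialize w (num5 p q) \<noteq> 0"
proof -
  show N: "specialize w (num4 p q) = 1"
    using p w by (simp add: num4_def specialize_add specialize_power)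
  show "specialize w (num5 p q) \<noteq> 0"
  proof (cases "p = 1")
    case True
    then have "specialize w (num5 p q) = 1 + of_nat q"
      using N by (simp add: num5_def specialize_add specialize_mult specialize_power specialize_sum)
    then show ?thesis
      by (metis of_nat_Suc of_nat_eq_0_iff nat.distinct(1) add.commute)
  next
    case False
    then have "specialize w (num5 p q) = 1"
      using p w by (simp add: num5_def specialize_add specialize_mult specialize_power)
    then show ?thesis
      by simp
  qed
qed

lemma exchange_seq_first_terms:
  assumes S: "exchange_seq e s"
  shows "s 3 * s 1 = eval2 (exch_poly (e 2)) (s 1) (s 2)"
    and "s 4 * s 1 ^ e 1 * s 2 = eval2 (num4 (e 1) (e 2)) (s 1) (s 2)"
    and "s 5 * s 1 ^ (e 1 * e 2) * s 2 ^ e 2 = eval2 ([:[:0, 1:]:] * num5 (e 1) (e 2)) (s 1) (s 2)"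
proof -
  define X Y p q where "X = s 1" and "Y = s 2" and "p = e 1" and "q = e 2"
  have p1: "p \<ge> 1"
    using S exchange_seq_def p_def by auto
  have e3: "e 3 = p" and e4: "e 4 = q"
    using S unfolding exchange_seq_def p_def q_def
    by (metis one_plus_numeral semiring_norm(3), metis numeral_Bit0 numeral_One one_add_one)
  have r2: "X * s 3 = Y ^ q + 1"
    using exchange_seq_rel[OF S, of 2] by (simp add: X_def Y_def q_def)
  have r3: "Y * s 4 = s 3 ^ p + 1"
    using exchange_seq_rel[OF S, of 3] e3 by (simp add: Y_def)
  have r4: "s 3 * s 5 = s 4 ^ q + 1"
    using exchange_seq_rel[OF S, of 4] e4 by simp
  have "s 3 \<noteq> 0"
    using exchange_seq_nonzero[OF S] by blast
  show "s 3 * s 1 = eval2 (exch_poly (e 2)) (s 1) (s 2)"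
    using r2 by (simp add: X_def Y_def q_def mult.commute)
  have s4: "s 4 * X ^ p * Y = eval2 (num4 p q) X Y"
  proof -
    have "s 4 * X ^ p * Y = (Y * s 4) * X ^ p"
      by (simp add: mult_ac)
    also have "\<dots> = (s 3 * X) ^ p + X ^ p"
      using r3 by (simp add: algebra_simps power_mult_distrib)
    also have "\<dots> = eval2 (num4 p q) X Y"
      using r2 by (simp add: num4_def eval2_add eval2_power mult.commute)
    finally show ?thesis .
  qed
  then show "s 4 * s 1 ^ e 1 * s 2 = eval2 (num4 (e 1) (e 2)) (s 1) (s 2)"
    by (simp add: X_def Y_def p_def q_def)
  have "eval2 (exch_poly q * num5 p q) X Y = eval2 (num4 p q) X Y ^ q + (X ^ p) ^ q * Y ^ q"
    unfolding num5_identity[OF p1, symmetric] by (simp add: eval2_add eval2_mult eval2_power)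
  also have "\<dots> = (s 4 ^ q + 1) * (X ^ p) ^ q * Y ^ q"
    unfolding s4[symmetric] by (simp add: algebra_simps power_mult_distrib)
  also have "\<dots> = s 3 * (s 5 * (X ^ p) ^ q * Y ^ q)"
    using r4 by (simp add: mult_ac)
  finally have "(s 3 * X) * eval2 (num5 p q) X Y = s 3 * (s 5 * (X ^ p) ^ q * Y ^ q)"
    using r2 by (simp add: eval2_mult mult.commute)
  then have "X * eval2 (num5 p q) X Y = s 5 * (X ^ p) ^ q * Y ^ q"
    using \<open>s 3 \<noteq> 0\<close> by (simp add: mult.assoc)
  then show "s 5 * s 1 ^ (e 1 * e 2) * s 2 ^ e 2 = eval2 ([:[:0, 1:]:] * num5 (e 1) (e 2)) (s 1) (s 2)"
    by (simp add: X_def Y_def p_def q_def power_mult eval2_mult)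
qed

lemma alg_indep2_exch_nonzero: "alg_indep2 u v \<Longrightarrow> v ^ q + 1 \<noteq> 0"
  unfolding alg_indep2_def by (metis eval2_exch_poly exch_poly_nonzero)

text \<open>Since Y^q + 1 has only simple roots and D does not vanish at any of them (for X = 1),
  the two localisations intersect in the Laurent polynomial ring.\<close>

lemma Laurent_loc_exch_inter:
  assumes indep: "alg_indep2 u v" and q: "q \<ge> 1"
    and D: "\<And>w. w ^ q = -1 \<Longrightarrow> specialize w D \<noteq> 0"
    and f_B: "f \<in> Laurent_loc u v (exch_poly q)" and f_D: "f \<in> Laurent_loc u v D"
  shows "f \<in> Laurent u v"
proof -
  let ?X = "[:[:0, 1:]:]" and ?Y = "[:0, 1:]" and ?B = "exch_poly q :: complex poly poly"
  obtain P1 i1 j1 k1 where P1: "f * u ^ i1 * v ^ j1 * eval2 ?B u v ^ k1 = eval2 P1 u v"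
    using f_B Laurent_loc_def by blast
  obtain P2 i2 j2 k2 where P2: "f * u ^ i2 * v ^ j2 * eval2 D u v ^ k2 = eval2 P2 u v"
    using f_D Laurent_loc_def by blast
  define M where "M = ?X ^ i2 * ?Y ^ j2 * D ^ k2"
  have "eval2 (P1 * M) u v = eval2 (P2 * ?X ^ i1 * ?Y ^ j1 * ?B ^ k1) u v"
    unfolding M_def eval2_mult eval2_power eval2_X eval2_Y P1[symmetric] P2[symmetric]
    by (simp add: mult_ac)
  then have "P1 * M = P2 * ?X ^ i1 * ?Y ^ j1 * ?B ^ k1"
    by (rule alg_indep2_eval2_inj[OF indep])
  then have "?B ^ k1 dvd P1 * M"
    by (metis dvd_triv_right)
  moreover have "poly M [:w:] \<noteq> 0" if w: "w ^ q = -1" for w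
  proof -
    have "w \<noteq> 0"
      using w by (cases q) auto
    then have "specialize w M \<noteq> 0"
      using D[OF w] by (simp add: M_def specialize_mult specialize_power)
    then show ?thesis
      by (auto simp: specialize_def)
  qed
  ultimately have "?B ^ k1 dvd P1"
    using exch_poly_power_dvd_cancel[OF q] by blast
  then obtain R where R: "P1 = ?B ^ k1 * R"
    by (auto elim: dvdE)
  have "(f * u ^ i1 * v ^ j1) * eval2 ?B u v ^ k1 = eval2 R u v * eval2 ?B u v ^ k1"
    using P1 R by (simp add: eval2_mult eval2_power mult_ac)
  moreover have "eval2 ?B u v \<noteq> 0"
    using alg_indep2_exch_nonzero[OF indep] by simp
  ultimately have "f * u ^ i1 * v ^ j1 = eval2 R u v"
    by simp
  then show ?thesis
    by (rule LaurentI)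
qed

lemma Laurent_exchange_subset_Laurent_loc:
  assumes "u \<noteq> 0" "v \<noteq> 0" "u' \<noteq> 0" and exch: "u' * u = v ^ q + 1"
  shows "Laurent v u' \<subseteq> Laurent_loc u v (exch_poly q)"
proof (rule Laurent_subset[OF subalgebra_Laurent_loc])
  show "v \<in> Laurent_loc u v (exch_poly q)"
    using eval2_in_Laurent_loc[of "[:0, 1:]" u v] by simp
  show "inverse v \<in> Laurent_loc u v (exch_poly q)"
    by (rule Laurent_locI[where i=0 and j=1 and k=0 and P=1]) (simp add: assms)
  show "u' \<in> Laurent_loc u v (exch_poly q)"
    by (rule Laurent_locI[where i=1 and j=0 and k=0 and P="exch_poly q"]) (simp add: exch)
  show "inverse u' \<in> Laurent_loc u v (exch_poly q)"
    by (rule Laurent_locI[where i=0 and j=0 and k=1 and P="[:[:0, 1:]:]"]) (simp add: assms flip: exch)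
qed (use assms in auto)

lemma exchange_seq_Laurent45_subset:
  assumes S: "exchange_seq e s"
  shows "Laurent (s 4) (s 5) \<subseteq> Laurent_loc (s 1) (s 2) (num4 (e 1) (e 2) * num5 (e 1) (e 2))"
proof -
  define X Y p q where "X = s 1" and "Y = s 2" and "p = e 1" and "q = e 2"
  define D where "D = num4 p q * num5 p q"
  note first = exchange_seq_first_terms[OF S, folded X_def Y_def p_def q_def]
  have nz: "s n \<noteq> 0" for n
    using exchange_seq_nonzero[OF S] .
  have ED: "eval2 D X Y = s 4 * X ^ p * Y * eval2 (num5 p q) X Y"
    using first(2) by (simp add: D_def eval2_mult)
  have s5: "X * eval2 (num5 p q) X Y = s 5 * X ^ (p * q) * Y ^ q"
    using first(3) by (simp add: eval2_mult)
  have "Laurent (s 4) (s 5) \<subseteq> Laurent_loc X Y D"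
  proof (rule Laurent_subset[OF subalgebra_Laurent_loc])
    show "s 4 \<in> Laurent_loc X Y D"
      by (rule Laurent_locI[where i=p and j=1 and k=0 and P="num4 p q"]) (use first(2) in simp)
    show "inverse (s 4) \<in> Laurent_loc X Y D"
      by (rule Laurent_locI[where i=0 and j=0 and k=1 and P="[:[:0, 1:]:] ^ p * [:0, 1:] * num5 p q"])
        (simp add: ED nz eval2_mult eval2_power)
    show "s 5 \<in> Laurent_loc X Y D"
      by (rule Laurent_locI[where i="p * q" and j=q and k=0 and P="[:[:0, 1:]:] * num5 p q"])
        (use first(3) in simp)
    have "inverse (s 5) * X ^ 1 * Y ^ 0 * eval2 D X Y ^ 1 = s 4 * X ^ p * Y * X ^ (p * q) * Y ^ q"
      using s5 nz by (simp add: ED field_simps)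
    also have "\<dots> = eval2 (num4 p q * [:[:0, 1:]:] ^ (p * q) * monom 1 q) X Y"
      using first(2) by (simp add: eval2_mult eval2_power mult_ac)
    finally show "inverse (s 5) \<in> Laurent_loc X Y D"
      by (rule Laurent_locI)
  qed (use nz in auto)
  then show ?thesis
    by (simp add: X_def Y_def D_def p_def q_def)
qed

lemma exchange_seq_Laurent_step:
  assumes S: "exchange_seq e s"
    and f23: "f \<in> Laurent (s 2) (s 3)" and f45: "f \<in> Laurent (s 4) (s 5)"
  shows "f \<in> Laurent (s 1) (s 2)"
proof (rule Laurent_loc_exch_inter)
  have "e 1 \<ge> 1"
    using S exchange_seq_def by auto
  show "alg_indep2 (s 1) (s 2)"
    using S unfolding exchange_seq_def by (metis one_add_one)
  show "e 2 \<ge> 1"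
    using S exchange_seq_def by auto
  show "f \<in> Laurent_loc (s 1) (s 2) (exch_poly (e 2))"
    using Laurent_exchange_subset_Laurent_loc[of "s 1" "s 2" "s 3" "e 2"] f23
      exchange_seq_nonzero[OF S] exchange_seq_first_terms(1)[OF S] by auto
  show "f \<in> Laurent_loc (s 1) (s 2) (num4 (e 1) (e 2) * num5 (e 1) (e 2))"
    using exchange_seq_Laurent45_subset[OF S] f45 by blast
  fix w :: complex assume "w ^ e 2 = -1"
  then show "specialize w (num4 (e 1) (e 2) * num5 (e 1) (e 2)) \<noteq> 0"
    using specialize_num4_num5[OF \<open>e 1 \<ge> 1\<close>] by (simp add: specialize_mult)
qed

lemma exchange_seq_Laurent_first_terms:
  assumes S: "exchange_seq e s"
  shows "s 3 \<in> Laurent (s 1) (s 2)" and "s 4 \<in> Laurent (s 1) (s 2)" and "s 5 \<in> Laurent (s 1) (s 2)"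
  using exchange_seq_first_terms[OF S]
  by (auto intro: LaurentI[where i=1 and j=0 and P="exch_poly (e 2)"]
      LaurentI[where i="e 1" and j=1] LaurentI[where i="e 1 * e 2" and j="e 2"])

lemma exchange_seq_Laurent_nat:
  "exchange_seq e s \<Longrightarrow> s (int m + 1) \<in> Laurent (s 1) (s 2)"
proof (induction m arbitrary: e s rule: less_induct)
  case (less m)
  note S = less.prems
  consider "m = 0" | "m = 1" | "m = 2" | "m = 3" | "m = 4" | "m \<ge> 5"
    by linarith
  then show ?case
  proof cases
    case 6
    have "(\<lambda>n. s (n + 1)) (int (m - 1) + 1) \<in> Laurent ((\<lambda>n. s (n + 1)) 1) ((\<lambda>n. s (n + 1)) 2)"
      by (rule less.IH[OF _ exchange_seq_shift[OF S]]) (use 6 in simp)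
    moreover have "int (m - 1) + 1 + 1 = int m + 1"
      using 6 by simp
    ultimately have "s (int m + 1) \<in> Laurent (s 2) (s 3)"
      by simp
    moreover have "(\<lambda>n. s (n + 3)) (int (m - 3) + 1) \<in> Laurent ((\<lambda>n. s (n + 3)) 1) ((\<lambda>n. s (n + 3)) 2)"
      by (rule less.IH[OF _ exchange_seq_shift[OF S]]) (use 6 in simp)
    moreover have "int (m - 3) + 1 + 3 = int m + 1"
      using 6 by simp
    ultimately show ?thesis
      using exchange_seq_Laurent_step[OF S] by (simp add: add.commute)
  qed (use exchange_seq_Laurent_first_terms[OF S] Laurent_gen1 Laurent_gen2 in simp_all)
qed

theorem exchange_seq_Laurent:
  assumes S: "exchange_seq e s"
  shows "s n \<in> Laurent (s 1) (s 2)"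
proof (cases "n \<ge> 1")
  case True
  then have "n = int (nat (n - 1)) + 1"
    by simp
  then show ?thesis
    using exchange_seq_Laurent_nat[OF S, of "nat (n - 1)"] by simp
next
  case False
  have "(\<lambda>n. s (3 - n)) (int (nat (2 - n)) + 1) \<in> Laurent ((\<lambda>n. s (3 - n)) 1) ((\<lambda>n. s (3 - n)) 2)"
    by (rule exchange_seq_Laurent_nat[OF exchange_seq_reflect[OF S]])
  moreover have "3 - (int (nat (2 - n)) + 1) = n"
    using False by simp
  ultimately show ?thesis
    by (simp add: Laurent_commute[of "s 2"])
qed

fun exch_iter :: "(int \<Rightarrow> nat) \<Rightarrow> ratfun2 \<Rightarrow> ratfun2 \<Rightarrow> nat \<Rightarrow> ratfun2" where
  "exch_iter e u v 0 = u"
| "exch_iter e u v (Suc 0) = v"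
| "exch_iter e u v (Suc (Suc k)) = (exch_iter e u v (Suc k) ^ e (int k + 2) + 1) / exch_iter e u v k"

lemma exch_iter_indep_rel:
  assumes "alg_indep2 u v"
  shows "alg_indep2 (exch_iter e u v k) (exch_iter e u v (Suc k)) \<and>
    exch_iter e u v k * exch_iter e u v (Suc (Suc k)) = exch_iter e u v (Suc k) ^ e (int k + 2) + 1"
proof (induction k)
  case 0
  then show ?case
    using assms alg_indep2_nonzero by simp
next
  case (Suc k)
  then have "alg_indep2 (exch_iter e u v (Suc k)) (exch_iter e u v (Suc (Suc k)))"
    using alg_indep2_exchange by simp
  then show ?case
    using alg_indep2_nonzero by simp
qed

text \<open>The unique exchange sequence with s 1 = u, s 2 = v: forwards from u, v for n \<ge> 1
  and backwards from v, u for n \<le> 2.\<close>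

definition cluster_seq :: "(int \<Rightarrow> nat) \<Rightarrow> ratfun2 \<Rightarrow> ratfun2 \<Rightarrow> int \<Rightarrow> ratfun2" where
  "cluster_seq e u v n =
    (if n \<ge> 1 then exch_iter e u v (nat (n - 1)) else exch_iter (\<lambda>n. e (3 - n)) v u (nat (2 - n)))"

lemma cluster_seq_1 [simp]: "cluster_seq e u v 1 = u"
  by (simp add: cluster_seq_def)

lemma cluster_seq_2 [simp]: "cluster_seq e u v 2 = v"
  by (simp add: cluster_seq_def)

lemma cluster_seq_backward:
  assumes "n \<le> 2"
  shows "cluster_seq e u v n = exch_iter (\<lambda>n. e (3 - n)) v u (nat (2 - n))"
proof (cases "n \<ge> 1")
  case True
  with assms consider "n = 1" | "n = 2"
    by linarith
  then show ?thesis
    by cases (simp_all add: cluster_seq_def)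
qed (simp add: cluster_seq_def)

lemma exchange_seq_cluster_seq:
  assumes indep: "alg_indep2 u v" and e_pos: "\<forall>n. e n \<ge> 1" and e_per: "\<forall>n. e (n + 2) = e n"
  shows "exchange_seq e (cluster_seq e u v)"
  unfolding exchange_seq_def
proof (intro conjI allI e_pos[rule_format] e_per[rule_format])
  fix n
  let ?z = "cluster_seq e u v" and ?e' = "\<lambda>n. e (3 - n)"
  note F = exch_iter_indep_rel[OF indep, of e]
  note B = exch_iter_indep_rel[OF alg_indep2_commute[OF indep], of ?e']
  show "alg_indep2 (?z n) (?z (n + 1))"
  proof (cases "n \<ge> 1")
    case True
    then have "nat (n + 1 - 1) = Suc (nat (n - 1))"
      by simp
    then show ?thesis
      using True F[of "nat (n - 1)"] by (simp add: cluster_seq_def)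
  next
    case False
    then have "nat (2 - n) = Suc (nat (2 - (n + 1)))"
      by simp
    then show ?thesis
      using False B[of "nat (2 - (n + 1))"] alg_indep2_commute by (simp add: cluster_seq_backward)
  qed
  show "?z (n - 1) * ?z (n + 1) = ?z n ^ e n + 1"
  proof (cases "n \<ge> 2")
    case True
    define k where "k = nat (n - 2)"
    have "nat (n - 1 - 1) = k" "nat (n - 1) = Suc k" "nat (n + 1 - 1) = Suc (Suc k)" "int k + 2 = n"
      using True by (simp_all add: k_def)
    then show ?thesis
      using True F[of k] by (simp add: cluster_seq_def)
  next
    case False
    define k where "k = nat (1 - n)"
    have "nat (2 - (n + 1)) = k" "nat (2 - n) = Suc k" "nat (2 - (n - 1)) = Suc (Suc k)" "3 - (int k + 2) = n"
      using False by (simp_all add: k_def)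
    then show ?thesis
      using False B[of k] by (simp add: cluster_seq_backward mult.commute)
  qed
qed

section \<open>The cluster algebra of the exchange matrix\<close>

definition exch_matrix :: "int \<Rightarrow> int \<Rightarrow> nat \<Rightarrow> nat \<Rightarrow> int" where
  "exch_matrix c d = (\<lambda>i j. if i = 1 \<and> j = 2 then - c else if i = 2 \<and> j = 1 then d else 0)"

definition exch_exp :: "int \<Rightarrow> int \<Rightarrow> int \<Rightarrow> nat" where
  "exch_exp c d n = (if even n then nat d else nat c)"

locale rank2_cluster =
  fixes c d :: int and x1 x2 :: ratfun2
  assumes c_pos: "c \<ge> 1" and d_ge_2: "d \<ge> 2" and indep: "alg_indep2 x1 x2"
begin

abbreviation z :: "int \<Rightarrow> ratfun2" where
  "z \<equiv> cluster_seq (exch_exp c d) x1 x2"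

abbreviation A :: "ratfun2 set" where
  "A \<equiv> cluster_algebra ((\<lambda>i. if i = 1 then x1 else x2), exch_matrix c d)"

lemma exchange_seq_z: "exchange_seq (exch_exp c d) z"
  by (rule exchange_seq_cluster_seq[OF indep]) (use c_pos d_ge_2 in \<open>auto simp: exch_exp_def\<close>)

lemma z_nonzero: "z n \<noteq> 0"
  by (rule exchange_seq_nonzero[OF exchange_seq_z])

lemma z_up: "z (n + 1) = inverse (z (n - 1)) * (z n ^ exch_exp c d n + 1)"
  using exchange_seq_rel[OF exchange_seq_z, of n] z_nonzero[of "n - 1"] by (simp add: field_simps)

lemma z_down: "z (n - 1) = inverse (z (n + 1)) * (z n ^ exch_exp c d n + 1)"
  using exchange_seq_rel[OF exchange_seq_z, of n] z_nonzero[of "n + 1"] by (simp add: field_simps)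

lemma mut_matrix_exch_matrix:
  "k \<in> {1, 2} \<Longrightarrow> mut_matrix k (exch_matrix c d) = - exch_matrix c d"
  "k \<in> {1, 2} \<Longrightarrow> mut_matrix k (- exch_matrix c d) = exch_matrix c d"
  using c_pos d_ge_2 by (auto simp: mut_matrix_def exch_matrix_def fun_eq_iff)

lemma exch_matrix_sign_sets:
  "{i\<in>{1::nat, 2}. exch_matrix c d i 1 > 0} = {2}" "{i\<in>{1::nat, 2}. exch_matrix c d i 1 < 0} = {}"
  "{i\<in>{1::nat, 2}. exch_matrix c d i 2 > 0} = {}" "{i\<in>{1::nat, 2}. exch_matrix c d i 2 < 0} = {1}"
  "{i\<in>{1::nat, 2}. (- exch_matrix c d) i 1 > 0} = {}" "{i\<in>{1::nat, 2}. (- exch_matrix c d) i 1 < 0} = {2}"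
  "{i\<in>{1::nat, 2}. (- exch_matrix c d) i 2 > 0} = {1}" "{i\<in>{1::nat, 2}. (- exch_matrix c d) i 2 < 0} = {}"
  using c_pos d_ge_2 by (auto simp: exch_matrix_def)

lemma mutate_positive_seed:
  assumes a: "odd a" and k: "k = 1 \<or> k = 2"
    and s: "fst s 1 = z a" "fst s 2 = z (a + 1)" "snd s = exch_matrix c d"
  shows "\<exists>a'. odd a' \<and> fst (mutate k s) 1 = z a' \<and> fst (mutate k s) 2 = z (a' - 1) \<and>
    snd (mutate k s) = - exch_matrix c d"
  using k
proof
  assume k1: "k = 1"
  have "z (a + 1 + 1) = inverse (z (a + 1 - 1)) * (z (a + 1) ^ nat d + 1)"
    using z_up[of "a + 1"] a by (simp add: exch_exp_def)
  then have "fst (mutate k s) 1 = z (a + 2) \<and> fst (mutate k s) 2 = z (a + 2 - 1) \<and>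
      snd (mutate k s) = - exch_matrix c d"
    using s k1 mut_matrix_exch_matrix c_pos d_ge_2
    by (simp add: mutate_def mut_cluster_def exch_matrix_sign_sets exch_matrix_def add.commute)
  moreover have "odd (a + 2)"
    using a by simp
  ultimately show ?thesis
    by blast
next
  assume k2: "k = 2"
  have "z (a - 1) = inverse (z (a + 1)) * (z a ^ nat c + 1)"
    using z_down[of a] a by (simp add: exch_exp_def)
  then have "fst (mutate k s) 1 = z a \<and> fst (mutate k s) 2 = z (a - 1) \<and>
      snd (mutate k s) = - exch_matrix c d"
    using s k2 mut_matrix_exch_matrix c_pos d_ge_2
    by (simp add: mutate_def mut_cluster_def exch_matrix_sign_sets exch_matrix_def add.commute)
  then show ?thesis
    using a by blast
qed

lemma mutate_negative_seed:
  assumes a: "odd a" and k: "k = 1 \<or> k = 2"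
    and s: "fst s 1 = z a" "fst s 2 = z (a - 1)" "snd s = - exch_matrix c d"
  shows "\<exists>a'. odd a' \<and> fst (mutate k s) 1 = z a' \<and> fst (mutate k s) 2 = z (a' + 1) \<and>
    snd (mutate k s) = exch_matrix c d"
  using k
proof
  assume k1: "k = 1"
  have "z (a - 1 - 1) = inverse (z (a - 1 + 1)) * (z (a - 1) ^ nat d + 1)"
    using z_down[of "a - 1"] a by (simp add: exch_exp_def)
  then have "fst (mutate k s) 1 = z (a - 2) \<and> fst (mutate k s) 2 = z (a - 2 + 1) \<and>
      snd (mutate k s) = exch_matrix c d"
    using s k1 mut_matrix_exch_matrix c_pos d_ge_2
    by (simp add: mutate_def mut_cluster_def exch_matrix_sign_sets exch_matrix_def add.commute)
  moreover have "odd (a - 2)"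
    using a by simp
  ultimately show ?thesis
    by blast
next
  assume k2: "k = 2"
  have "z (a + 1) = inverse (z (a - 1)) * (z a ^ nat c + 1)"
    using z_up[of a] a by (simp add: exch_exp_def)
  then have "fst (mutate k s) 1 = z a \<and> fst (mutate k s) 2 = z (a + 1) \<and>
      snd (mutate k s) = exch_matrix c d"
    using s k2 mut_matrix_exch_matrix c_pos d_ge_2
    by (simp add: mutate_def mut_cluster_def exch_matrix_sign_sets exch_matrix_def add.commute)
  then show ?thesis
    using a by blast
qed

lemma reachable_seed_cases:
  assumes "s \<in> reachable_seeds ((\<lambda>i. if i = 1 then x1 else x2), exch_matrix c d)"
  shows "\<exists>a. odd a \<and> ((fst s 1 = z a \<and> fst s 2 = z (a + 1) \<and> snd s = exch_matrix c d) \<or>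
                       (fst s 1 = z a \<and> fst s 2 = z (a - 1) \<and> snd s = - exch_matrix c d))"
  using assms
proof induction
  case base
  show ?case
    by (rule exI[of _ 1]) simp
next
  case (step s k)
  then have k: "k = 1 \<or> k = 2"
    by auto
  from step.IH show ?case
    using mutate_positive_seed[OF _ k] mutate_negative_seed[OF _ k] by blast
qed

lemma subalgebra_A: "is_subalgebra A"
  unfolding is_subalgebra_def by (auto intro: cluster_algebra.intros)

lemma A_subset:
  assumes L: "is_subalgebra L" and z_L: "\<And>n. z n \<in> L"
  shows "A \<subseteq> L"
proof
  fix f assume "f \<in> A"
  then show "f \<in> L"
  proof induction
    case (const a)
    then show ?case
      by (rule subalgebra_cst[OF L])
  next
    case (var s k)
    then show ?case
      using reachable_seed_cases[OF var.hyps(1)] z_L by auto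
  next
    case (add u v)
    then show ?case
      by (blast intro: subalgebra_add[OF L])
  next
    case (mult u v)
    then show ?case
      by (blast intro: subalgebra_mult[OF L])
  qed
qed

lemma A_subset_Laurent_12: "A \<subseteq> Laurent x1 x2"
  using exchange_seq_Laurent[OF exchange_seq_z] by (intro A_subset subalgebra_Laurent) simp

lemma A_subset_Laurent_32: "A \<subseteq> Laurent (z 3) x2"
proof (rule A_subset[OF subalgebra_Laurent])
  fix n
  have "(\<lambda>n. z (4 - n)) (4 - n) \<in> Laurent ((\<lambda>n. z (4 - n)) 1) ((\<lambda>n. z (4 - n)) 2)"
    by (rule exchange_seq_Laurent[OF exchange_seq_reflect[OF exchange_seq_z]])
  then show "z n \<in> Laurent (z 3) x2"
    by simp
qed

lemma A_subset_Laurent_01: "A \<subseteq> Laurent (z 0) x1"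
proof (rule A_subset[OF subalgebra_Laurent])
  fix n
  have "(\<lambda>n. z (n + -1)) (n + 1) \<in> Laurent ((\<lambda>n. z (n + -1)) 1) ((\<lambda>n. z (n + -1)) 2)"
    by (rule exchange_seq_Laurent[OF exchange_seq_shift[OF exchange_seq_z]])
  then show "z n \<in> Laurent (z 0) x1"
    by simp
qed

lemma alg_indep2_z32: "alg_indep2 (z 3) x2"
proof -
  have "alg_indep2 (z 2) (z (2 + 1))"
    using exchange_seq_z exchange_seq_def by blast
  then show ?thesis
    by (simp add: alg_indep2_commute)
qed

lemma alg_indep2_z01: "alg_indep2 (z 0) x1"
proof -
  have "alg_indep2 (z 0) (z (0 + 1))"
    using exchange_seq_z exchange_seq_def by blast
  then show ?thesis
    by simp
qed

lemma x1_z3: "x1 * z 3 = x2 ^ nat d + 1"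
  using exchange_seq_rel[OF exchange_seq_z, of 2] by (simp add: exch_exp_def)

lemma x2_z0: "x2 * z 0 = x1 ^ nat c + 1"
  using exchange_seq_rel[OF exchange_seq_z, of 1] by (simp add: exch_exp_def mult.commute)

lemma x1_in_A: "x1 \<in> A"
proof -
  have "fst ((\<lambda>i::nat. if i = 1 then x1 else x2), exch_matrix c d) (1::nat) \<in> A"
    by (rule cluster_algebra.var[OF reachable_seeds.base]) simp
  then show ?thesis
    by simp
qed

lemma x2_in_A: "x2 \<in> A"
proof -
  have "fst ((\<lambda>i::nat. if i = 1 then x1 else x2), exch_matrix c d) (2::nat) \<in> A"
    by (rule cluster_algebra.var[OF reachable_seeds.base]) simp
  then show ?thesis
    by simp
qed

lemma z3_in_A: "z 3 \<in> A"
proof -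
  let ?s = "mutate 1 ((\<lambda>i. if i = 1 then x1 else x2), exch_matrix c d)"
  have "fst ?s 1 \<in> A"
    by (rule cluster_algebra.var[OF reachable_seeds.step[OF reachable_seeds.base]]) simp_all
  moreover have "fst ?s 1 = inverse x1 * (x2 ^ nat d + 1)"
    by (simp only: mutate_def fst_conv snd_conv mut_cluster_def fun_upd_same exch_matrix_sign_sets)
      (simp add: exch_matrix_def)
  moreover have "z (2 + 1) = inverse (z (2 - 1)) * (z 2 ^ exch_exp c d 2 + 1)"
    by (rule z_up)
  ultimately show ?thesis
    by (simp add: exch_exp_def)
qed


end

section \<open>The cluster variable x1 is irreducible but not prime\<close>

lemma exponent_le_if_Laurent:
  assumes indep: "alg_indep2 u' v" and q: "q \<ge> 1" and exch: "u * u' = v ^ q + 1"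
    and u: "u \<noteq> 0" and \<alpha>: "\<alpha> \<noteq> 0"
    and eq: "h * u ^ i = cst \<alpha> * v ^ s * u ^ r"
    and h_Laurent: "\<And>m. h * u ^ m \<in> Laurent u' v"
  shows "i \<le> r"
proof (rule ccontr)
  assume "\<not> i \<le> r"
  then obtain m where i: "i = Suc (r + m)"
    using less_imp_Suc_add[of r i] by auto
  have "(h * u ^ m * u) * u ^ r = h * u ^ i"
    unfolding i by (simp add: power_add mult_ac)
  also have "\<dots> = (cst \<alpha> * v ^ s) * u ^ r"
    using eq by (simp add: mult_ac)
  finally have hu: "h * u ^ m * u = cst \<alpha> * v ^ s"
    using u by simp
  have "(h * u ^ m) * (v ^ q + 1) = (h * u ^ m * u) * u'"
    by (simp flip: exch add: mult.assoc)
  also have "\<dots> = peval v (monom \<alpha> s) * u' ^ 1 * v ^ 0"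
    by (simp add: hu)
  finally have "(h * u ^ m) * (v ^ q + 1) = peval v (monom \<alpha> s) * u' ^ 1 * v ^ 0" .
  moreover obtain w :: complex where w: "w ^ q = -1"
    using exists_root_neg1_nonroot[OF q one_neq_zero] q by auto
  moreover have "w \<noteq> 0"
    using w by (cases q) auto
  then have "poly (monom \<alpha> s) w \<noteq> 0"
    using \<alpha> by (simp add: poly_monom)
  ultimately have "h * u ^ m \<notin> Laurent u' v"
    using not_in_Laurent_if_exch_denominator[OF indep] by blast
  then show False
    using h_Laurent by blast
qed

lemma monom_factor_is_monom:
  fixes p q :: "'a::idom poly"
  assumes pq: "p * q = monom c n" and c: "c \<noteq> 0"
  shows "\<exists>a k. p = monom a k"
proof -
  have nz: "p * q \<noteq> 0"
    using pq c by simp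
  then have p0: "p \<noteq> 0" and q0: "q \<noteq> 0"
    by auto
  have "Polynomial.order 0 (p * q) = n"
    unfolding pq monom_altdef using c by (simp add: order_smult order_power_n_n[of 0, simplified])
  then have ord: "Polynomial.order 0 p + Polynomial.order 0 q = n"
    using order_mult[OF nz] by simp
  have "degree (p * q) = n"
    unfolding pq using c by (simp add: degree_monom_eq)
  then have deg: "degree p + degree q = n"
    using degree_mult_eq[OF p0 q0] by simp
  have "Polynomial.order 0 p \<le> degree p" "Polynomial.order 0 q \<le> degree q"
    using order_degree p0 q0 by auto
  then have "Polynomial.order 0 p = degree p"
    using ord deg by linarith
  moreover have "[:-0, 1:] ^ Polynomial.order 0 p dvd p"
    by (rule order_1)
  ultimately obtain r where r: "p = [:0, 1:] ^ degree p * r"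
    by (auto elim: dvdE)
  have "degree p = degree ([:0, 1:] ^ degree p :: 'a poly) + degree r"
    using p0 r by (metis degree_mult_eq mult_eq_0_iff)
  then have "degree r = 0"
    by (simp add: degree_power_eq)
  then have "r = [:coeff r 0:]"
    by (rule degree_0_id[symmetric])
  moreover have "t * [:a:] = smult a t" for t :: "'a poly" and a
    by (subst mult.commute) (simp add: mult_pCons_left)
  ultimately have "p = monom (coeff r 0) (degree p)"
    using r by (metis monom_altdef)
  then show ?thesis
    by blast
qed

lemma monom2_factor_is_monom2:
  fixes P Q :: "complex poly poly"
  assumes PQ: "P * Q = monom (monom 1 m) n"
  shows "\<exists>\<alpha> r s \<beta> r' s'. P = monom (monom \<alpha> r) s \<and> Q = monom (monom \<beta> r') s'"
proof -
  have m0: "monom (1::complex) m \<noteq> 0"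
    by simp
  obtain A s where A: "P = monom A s"
    using monom_factor_is_monom[OF PQ m0] by blast
  obtain B s' where B: "Q = monom B s'"
    using monom_factor_is_monom[of Q P, OF _ m0] PQ by (metis mult.commute)
  have "monom (A * B) (s + s') = monom (monom 1 m) n"
    using PQ A B by (simp add: mult_monom)
  then have AB: "A * B = monom 1 m"
    by (simp add: monom_eq_iff')
  obtain \<alpha> r where "A = monom \<alpha> r"
    using monom_factor_is_monom[OF AB] by auto
  moreover obtain \<beta> r' where "B = monom \<beta> r'"
    using monom_factor_is_monom[of B A, OF _ one_neq_zero] AB by (metis mult.commute)
  ultimately show ?thesis
    using A B by blast
qed

lemma subring_struct_simps [simp]:
  "carrier (subring_struct S) = S" "\<zero>\<^bsub>subring_struct S\<^esub> = 0"
  "x \<otimes>\<^bsub>subring_struct S\<^esub> y = x * y" "\<one>\<^bsub>subring_struct S\<^esub> = 1"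
  by (simp_all add: subring_struct_def)

context rank2_cluster
begin

abbreviation G where "G \<equiv> mult_of (subring_struct A)"

lemma A_monomial_exponents:
  assumes g: "g \<in> A" and \<alpha>: "\<alpha> \<noteq> 0" and eq: "g * x1 ^ i * x2 ^ j = cst \<alpha> * x1 ^ r * x2 ^ s"
  shows "i \<le> r" and "j \<le> s"
proof -
  have x12: "x1 \<noteq> 0" "x2 \<noteq> 0"
    using alg_indep2_nonzero[OF indep] by auto
  have in_A: "g * x1 ^ m * x2 ^ n \<in> A" for m n
    by (intro subalgebra_mult[OF subalgebra_A] subalgebra_power[OF subalgebra_A] g x1_in_A x2_in_A)
  show "i \<le> r"
  proof (rule exponent_le_if_Laurent[OF alg_indep2_z32 _ x1_z3 x12(1) \<alpha>])
    show "nat d \<ge> 1"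
      using d_ge_2 by simp
    show "(g * x2 ^ j) * x1 ^ i = cst \<alpha> * x2 ^ s * x1 ^ r"
      using eq by (simp add: mult_ac)
    show "(g * x2 ^ j) * x1 ^ m \<in> Laurent (z 3) x2" for m
      using in_A[of m j] A_subset_Laurent_32 by (auto simp: mult_ac)
  qed
  show "j \<le> s"
  proof (rule exponent_le_if_Laurent[OF alg_indep2_z01 _ x2_z0 x12(2) \<alpha>])
    show "nat c \<ge> 1"
      using c_pos by simp
    show "(g * x1 ^ i) * x2 ^ j = cst \<alpha> * x1 ^ r * x2 ^ s"
      using eq by (simp add: mult_ac)
    show "(g * x1 ^ i) * x2 ^ m \<in> Laurent (z 0) x1" for m
      using in_A[of i m] A_subset_Laurent_01 by auto
  qed
qed

lemma x1_factor_const: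
  assumes a: "a \<in> A" and b: "b \<in> A" and ab: "a * b = x1"
  shows "(\<exists>\<alpha>. \<alpha> \<noteq> 0 \<and> a = cst \<alpha>) \<or> (\<exists>\<beta>. \<beta> \<noteq> 0 \<and> b = cst \<beta>)"
proof -
  have x12: "x1 ^ m * x2 ^ n \<noteq> 0" for m n
    using alg_indep2_nonzero[OF indep] by simp
  obtain P i j where P: "a * x1 ^ i * x2 ^ j = eval2 P x1 x2"
    using a A_subset_Laurent_12 Laurent_def by blast
  obtain Q k l where Q: "b * x1 ^ k * x2 ^ l = eval2 Q x1 x2"
    using b A_subset_Laurent_12 Laurent_def by blast
  have "eval2 (P * Q) x1 x2 = (a * b) * x1 ^ (i + k) * x2 ^ (j + l)"
    unfolding eval2_mult P[symmetric] Q[symmetric] by (simp add: power_add mult_ac)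
  also have "\<dots> = eval2 (monom (monom 1 (i + k + 1)) (j + l)) x1 x2"
    using ab by (simp add: power_add mult_ac)
  finally have PQ: "P * Q = monom (monom 1 (i + k + 1)) (j + l)"
    by (rule alg_indep2_eval2_inj[OF indep])
  then obtain \<alpha> r s \<beta> r' s' where P': "P = monom (monom \<alpha> r) s" and Q': "Q = monom (monom \<beta> r') s'"
    using monom2_factor_is_monom2 by blast
  have "monom (monom (\<alpha> * \<beta>) (r + r')) (s + s') = monom (monom 1 (i + k + 1)) (j + l)"
    using PQ P' Q' by (simp add: mult_monom)
  then have \<alpha>\<beta>: "\<alpha> * \<beta> = 1" and rr: "r + r' = i + k + 1" and ss: "s + s' = j + l"
    by (auto simp: monom_eq_iff')
  then have "\<alpha> \<noteq> 0" "\<beta> \<noteq> 0"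
    by auto
  have a_mon: "a * x1 ^ i * x2 ^ j = cst \<alpha> * x1 ^ r * x2 ^ s"
    using P P' by simp
  have b_mon: "b * x1 ^ k * x2 ^ l = cst \<beta> * x1 ^ r' * x2 ^ s'"
    using Q Q' by simp
  have "i \<le> r" "j \<le> s" "k \<le> r'" "l \<le> s'"
    using A_monomial_exponents[OF a \<open>\<alpha> \<noteq> 0\<close> a_mon] A_monomial_exponents[OF b \<open>\<beta> \<noteq> 0\<close> b_mon]
    by auto
  with rr ss consider "r = i" "s = j" | "r' = k" "s' = l"
    by linarith
  then show ?thesis
  proof cases
    case 1
    then have "a * (x1 ^ i * x2 ^ j) = cst \<alpha> * (x1 ^ i * x2 ^ j)"
      using a_mon by (simp add: mult_ac)
    then show ?thesis
      using x12 \<open>\<alpha> \<noteq> 0\<close> by auto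
  next
    case 2
    then have "b * (x1 ^ k * x2 ^ l) = cst \<beta> * (x1 ^ k * x2 ^ l)"
      using b_mon by (simp add: mult_ac)
    then show ?thesis
      using x12 \<open>\<beta> \<noteq> 0\<close> by auto
  qed
qed

lemma cst_Units:
  assumes "\<alpha> \<noteq> 0"
  shows "cst \<alpha> \<in> Units G"
proof -
  have "cst \<alpha> * cst (inverse \<alpha>) = 1"
    using assms by (simp flip: cst_mult)
  then show ?thesis
    unfolding Units_def using assms cluster_algebra.const
    by (auto intro!: bexI[of _ "cst (inverse \<alpha>)"] simp: mult.commute)
qed

lemma peval_x2_in_A: "peval x2 h \<in> A"
  using subalgebra_eval2[OF subalgebra_A x1_in_A x2_in_A, of "lift_Y h"] by simp

lemma x1_carrier: "x1 \<in> carrier G"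
  using x1_in_A alg_indep2_nonzero[OF indep] by simp

lemma x1_not_unit: "x1 \<notin> Units G"
proof
  assume "x1 \<in> Units G"
  then obtain y where y: "y \<in> A" "y * x1 = 1"
    unfolding Units_def by auto
  then have "y * x1 ^ 1 * x2 ^ 0 = cst 1 * x1 ^ 0 * x2 ^ 0"
    by simp
  from A_monomial_exponents(1)[OF y(1) _ this] show False
    by simp
qed

lemma x1_irreducible: "Divisibility.irreducible G x1"
  unfolding Divisibility.irreducible_def
proof (intro conjI ballI impI x1_not_unit)
  fix b assume b: "b \<in> carrier G" and proper: "properfactor G b x1"
  then obtain e where e: "e \<in> carrier G" and be: "x1 = b * e"
    unfolding properfactor_def factor_def by auto
  have not_dvd: "\<not> x1 divides\<^bsub>G\<^esub> b"
    using proper unfolding properfactor_def by auto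
  from x1_factor_const[of b e] b e be
  consider (b_const) \<alpha> where "\<alpha> \<noteq> 0" "b = cst \<alpha>" | (e_const) \<beta> where "\<beta> \<noteq> 0" "e = cst \<beta>"
    by auto
  then show "b \<in> Units G"
  proof cases
    case b_const
    then show ?thesis
      using cst_Units by simp
  next
    case (e_const \<beta>)
    then have "b = x1 * cst (inverse \<beta>)"
      using be by (simp flip: cst_mult add: mult.assoc)
    moreover have "cst (inverse \<beta>) \<in> carrier G"
      using e_const cluster_algebra.const by auto
    ultimately have "x1 divides\<^bsub>G\<^esub> b"
      unfolding factor_def by auto
    with not_dvd show ?thesis
      by blast
  qed
qed

lemma x1_not_divides:
  assumes h: "h \<noteq> 0" "degree h < nat d"
  shows "\<not> x1 divides\<^bsub>G\<^esub> peval x2 h"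
proof
  assume "x1 divides\<^bsub>G\<^esub> peval x2 h"
  then obtain w where w: "w \<in> A" and hw: "peval x2 h = x1 * w"
    unfolding factor_def by auto
  have "w * (x2 ^ nat d + 1) = peval x2 h * z 3 ^ 1 * x2 ^ 0"
    by (simp add: hw mult_ac flip: x1_z3)
  moreover have "nat d \<ge> 1"
    using d_ge_2 by simp
  then obtain \<zeta> where "\<zeta> ^ nat d = -1" "poly h \<zeta> \<noteq> 0"
    using exists_root_neg1_nonroot[OF _ h] by blast
  ultimately have "w \<notin> Laurent (z 3) x2"
    using not_in_Laurent_if_exch_denominator[OF alg_indep2_z32] by blast
  then show False
    using w A_subset_Laurent_32 by blast
qed

text \<open>Here d \<ge> 2 is used: both factors of x2 ^ d + 1 = (x2 - \<zeta>) g(x2) have degree less than d.\<close>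

lemma x1_not_prime: "\<not> Divisibility.prime G x1"
proof
  assume prime: "Divisibility.prime G x1"
  have d: "nat d \<ge> 1"
    using d_ge_2 by simp
  obtain \<zeta> :: complex where \<zeta>: "\<zeta> ^ nat d = -1"
    using exists_root_neg1_nonroot[OF d one_neq_zero] d_ge_2 by auto
  have "poly (exch_poly (nat d)) \<zeta> = 0"
    using \<zeta> by (simp add: exch_poly_def poly_monom)
  then obtain g where g: "exch_poly (nat d) = [:-\<zeta>, 1:] * g"
    by (auto simp: poly_eq_0_iff_dvd elim: dvdE)
  have "g \<noteq> 0"
    using g exch_poly_nonzero by force
  have "degree ([:-\<zeta>, 1:] * g) = nat d"
    using degree_exch_poly[OF d, where 'a=complex] by (simp flip: g)
  then have "degree g < nat d"
    using \<open>g \<noteq> 0\<close> d_ge_2 by (simp add: degree_mult_eq)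
  have factors: "peval x2 [:-\<zeta>, 1:] * peval x2 g = x1 * z 3"
    by (simp add: x1_z3 flip: peval_mult g)
  moreover have "x1 * z 3 \<noteq> 0"
    using x1_carrier z_nonzero by simp
  ultimately have "peval x2 [:-\<zeta>, 1:] \<in> carrier G" "peval x2 g \<in> carrier G"
    using peval_x2_in_A by auto
  moreover have "x1 divides\<^bsub>G\<^esub> peval x2 [:-\<zeta>, 1:] \<otimes>\<^bsub>G\<^esub> peval x2 g"
    unfolding factor_def using factors z3_in_A z_nonzero by auto
  ultimately have "x1 divides\<^bsub>G\<^esub> peval x2 [:-\<zeta>, 1:] \<or> x1 divides\<^bsub>G\<^esub> peval x2 g"
    using prime unfolding Divisibility.prime_def by blast
  moreover have "\<not> x1 divides\<^bsub>G\<^esub> peval x2 [:-\<zeta>, 1:]"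
    by (rule x1_not_divides) (use d_ge_2 in auto)
  moreover have "\<not> x1 divides\<^bsub>G\<^esub> peval x2 g"
    by (rule x1_not_divides[OF \<open>g \<noteq> 0\<close> \<open>degree g < nat d\<close>])
  ultimately show False
    by blast
qed

lemma not_factorial_domain: "\<not> factorial_domain (subring_struct A)"
proof
  assume "factorial_domain (subring_struct A)"
  then have "factorial_monoid G"
    unfolding factorial_domain_def by blast
  then have "Divisibility.prime G x1"
    by (rule factorial_monoid.irreducible_prime[OF _ x1_irreducible x1_carrier])
  with x1_not_prime show False ..
qed

end

theorem corollary6p4:
  fixes c d :: int and x1 x2 :: ratfun2
  assumes "c \<ge> 1" and "d \<ge> 2"
    and "alg_indep2 x1 x2"
  shows "\<not> factorial_domain (subring_struct
           (cluster_algebra ((\<lambda>i. if i = 1 then x1 else x2),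
              (\<lambda>i j. if i = 1 \<and> j = 2 then - c else if i = 2 \<and> j = 1 then d else 0))))"
proof -
  interpret rank2_cluster c d x1 x2
    using assms by unfold_locales
  show ?thesis
    using not_factorial_domain unfolding exch_matrix_def .
qed

end
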